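(* Let the target $m$ and surrogate $\tilde m$ be binary classifiers on $[0,1]^d$ that are locally Lipschitz continuous with constants $\gamma_m$ and $\gamma_{\tilde m}$ respectively (not necessarily ReLU), such that $m(\boldsymbol{w})=\tilde m(\boldsymbol{w})$ for every counterfactual $\boldsymbol{w}$. Assume the counterfactuals form a $\delta$-cover of the decision boundary of $m$. Then $|\tilde m(\boldsymbol{x})-m(\boldsymbol{x})|\le(\gamma_m+\gamma_{\tilde m})\,\delta$ for every $\boldsymbol{x}$ on the decision boundary of $m$.
   Context: A binary classifier $m:[0,1]^d\to[0,1]$ has predicted class $\mathds{1}[m(\boldsymbol{x})\ge0.5]$ and decision boundary $\{\boldsymbol{x}:m(\boldsymbol{x})=0.5\}$. A model $m$ is locally Lipschitz continuous (with constant $\gamma\ge0$) if for every $\boldsymbol{x}_1\in[0,1]^d$ there is a neighborhood $\mathbb{B}_{\boldsymbol{x}_1}\subseteq[0,1]^d$ of $\boldsymbol{x}_1$ such that $|m(\boldsymbol{x}_1)-m(\boldsymbol{x}_2)|\le\gamma\|\boldsymbol{x}_1-\boldsymbol{x}_2\|_2$ for all $\boldsymbol{x}_2\in\mathbb{B}_{\boldsymbol{x}_1}$. Counterfactuals are points returned by a counterfactual generator for queries (points of the favorable region obtained from queries in the unfavorable region). The counterfactuals form a $\delta$-cover of the decision boundary if every point $\boldsymbol{x}$ of the decision boundary of $m$ has a counterfactual $\boldsymbol{w}$ with $\|\boldsymbol{x}-\boldsymbol{w}\|_2\le\delta$. *)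

theory Defs
  imports "HOL-Analysis.Analysis"
begin

definition unit_cube :: "(real ^ 'd) set" where
  "unit_cube = {x. \<forall>i. 0 \<le> x $ i \<and> x $ i \<le> 1}"

definition binary_classifier :: "(real ^ 'd \<Rightarrow> real) \<Rightarrow> bool" where
  "binary_classifier m \<longleftrightarrow> (\<forall>x\<in>unit_cube. 0 \<le> m x \<and> m x \<le> 1)"

definition decision_boundary :: "(real ^ 'd \<Rightarrow> real) \<Rightarrow> (real ^ 'd) set" where
  "decision_boundary m = {x \<in> unit_cube. m x = 1/2}"

text \<open>Locally Lipschitz with constant gamma: every point x1 of the cube has a
  neighbourhood (relative to the cube, i.e. containing U \<inter> cube for some open U \<ni> x1)
  on which the Lipschitz inequality against x1 holds.\<close>
definition locally_lipschitz :: "real \<Rightarrow> (real ^ 'd \<Rightarrow> real) \<Rightarrow> bool" where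
  "locally_lipschitz \<gamma> m \<longleftrightarrow> \<gamma> \<ge> 0 \<and>
     (\<forall>x1\<in>unit_cube. \<exists>B. B \<subseteq> unit_cube \<and> (\<exists>U. open U \<and> x1 \<in> U \<and> U \<inter> unit_cube \<subseteq> B) \<and>
        (\<forall>x2\<in>B. \<bar>m x1 - m x2\<bar> \<le> \<gamma> * norm (x1 - x2)))"

definition delta_cover :: "real \<Rightarrow> (real ^ 'd) set \<Rightarrow> (real ^ 'd \<Rightarrow> real) \<Rightarrow> bool" where
  "delta_cover \<delta> W m \<longleftrightarrow> (\<forall>x\<in>decision_boundary m. \<exists>w\<in>W. norm (x - w) \<le> \<delta>)"

end

theory Submission
  imports Defs
begin

text \<open>A Lipschitz bound that only holds near each point against that point is enough to make
  a function globally Lipschitz on a convex set: restricted to a segment, the function satisfies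
  the hypothesis of the one-dimensional continuation argument \<open>locally_lipschitz_imp_lipschitz\<close>.
  Both classifiers are therefore Lipschitz on the whole cube, and for a counterfactual \<open>w\<close>
  within \<open>\<delta>\<close> of \<open>x\<close> the triangle inequality through \<open>m w = mt w\<close> gives the bound.
  The ranges of the classifiers and the value \<open>m x = 1/2\<close> play no role.\<close>

lemma convex_unit_cube: "convex (unit_cube :: (real ^ 'd) set)"
proof -
  have "convex {x :: real ^ 'd. \<forall>i. x $ i \<in> {0..1}}"
    by (rule convex_box_cart) (simp only: Collect_mem_eq convex_real_interval)
  then show ?thesis
    by (simp add: unit_cube_def)
qed

lemma continuous_on_if_pointwise_lipschitz:
  fixes f :: "'a::metric_space \<Rightarrow> 'b::metric_space"
  assumes "\<And>x. x \<in> S \<Longrightarrow> \<exists>U. open U \<and> x \<in> U \<and> (\<forall>y\<in>U \<inter> S. dist (f x) (f y) \<le> L * dist x y)"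
  shows "continuous_on S f"
  unfolding continuous_on_eq_continuous_within
proof
  fix x assume "x \<in> S"
  then obtain U where U: "open U" "x \<in> U" and lip: "\<forall>y\<in>U \<inter> S. dist (f x) (f y) \<le> L * dist x y"
    using assms by blast
  have "\<forall>\<^sub>F y in at x within S. y \<in> U \<inter> S"
    unfolding eventually_at_topological using U by (intro exI[of _ U]) auto
  then have "\<forall>\<^sub>F y in at x within S. norm (dist (f y) (f x)) \<le> L * dist y x"
    by eventually_elim (use lip in \<open>auto simp: dist_commute\<close>)
  moreover have "((\<lambda>y. L * dist y x) \<longlongrightarrow> 0) (at x within S)"
    using tendsto_dist_iff[THEN iffD1, OF tendsto_ident_at] by (rule tendsto_mult_right_zero)
  ultimately have "((\<lambda>y. dist (f y) (f x)) \<longlongrightarrow> 0) (at x within S)"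
    by (rule Lim_null_comparison)
  then show "continuous (at x within S) f"
    unfolding continuous_within by (rule tendsto_dist_iff[THEN iffD2])
qed

lemma lipschitz_on_interval_if_pointwise_lipschitz:
  fixes g :: "real \<Rightarrow> 'b::metric_space"
  assumes "M \<ge> 0"
    and pointwise: "\<And>t. t \<in> {a..b} \<Longrightarrow> \<exists>U. open U \<and> t \<in> U \<and> (\<forall>s\<in>U \<inter> {a..b}. dist (g t) (g s) \<le> M * dist t s)"
  shows "M-lipschitz_on {a..b} g"
proof (rule locally_lipschitz_imp_lipschitz[OF _ _ \<open>M \<ge> 0\<close>])
  show "continuous_on {a..b} g"
    using pointwise by (rule continuous_on_if_pointwise_lipschitz)
  fix t y :: real assume t: "t \<in> {a..<b}" and "t < y"
  obtain U where "open U" "t \<in> U" and lip: "\<forall>s\<in>U \<inter> {a..b}. dist (g t) (g s) \<le> M * dist t s"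
    using pointwise[of t] t by auto
  have "\<forall>\<^sub>F s in at_right t. s \<in> U"
    using tendsto_ident_at \<open>open U\<close> \<open>t \<in> U\<close> by (rule topological_tendstoD)
  moreover have "\<forall>\<^sub>F s in at_right t. t < s \<and> s < min y b"
    using t \<open>t < y\<close> unfolding eventually_at_right_field
    by (intro exI[of _ "min y b"]) auto
  ultimately have "\<forall>\<^sub>F s in at_right t. s \<in> U \<and> t < s \<and> s < min y b"
    by (rule eventually_conj)
  then obtain z where z: "z \<in> U" "t < z" "z < min y b"
    using eventually_happens'[OF trivial_limit_at_right_real] by blast
  then have "dist (g t) (g z) \<le> M * dist t z"
    using lip t by auto
  then show "\<exists>z\<in>{t<..y}. dist (g z) (g t) \<le> M * (z - t)"
    using z by (intro bexI[of _ z]) (auto simp: dist_commute dist_real_def)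
qed

lemma lipschitz_on_convex_if_pointwise_lipschitz:
  fixes f :: "'a::real_normed_vector \<Rightarrow> 'b::metric_space"
  assumes "convex S" "L \<ge> 0"
    and pointwise: "\<And>x. x \<in> S \<Longrightarrow> \<exists>U. open U \<and> x \<in> U \<and> (\<forall>y\<in>U \<inter> S. dist (f x) (f y) \<le> L * dist x y)"
  shows "L-lipschitz_on S f"
proof (rule lipschitz_onI[OF _ \<open>L \<ge> 0\<close>])
  fix a b assume "a \<in> S" "b \<in> S"
  define p where "p t = (1 - t) *\<^sub>R a + t *\<^sub>R b" for t
  have p_in: "p t \<in> S" if "t \<in> {0..1}" for t
    using convexD[OF \<open>convex S\<close> \<open>a \<in> S\<close> \<open>b \<in> S\<close>, of "1 - t" t] that by (simp add: p_def)
  have dist_p: "dist (p t) (p s) = dist a b * dist t s" for s t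
  proof -
    have "p t - p s = (t - s) *\<^sub>R (b - a)"
      by (simp add: p_def algebra_simps)
    then show ?thesis
      by (simp add: dist_norm dist_real_def norm_minus_commute)
  qed
  have "(L * dist a b)-lipschitz_on {0..1} (f \<circ> p)"
  proof (rule lipschitz_on_interval_if_pointwise_lipschitz)
    show "L * dist a b \<ge> 0"
      using \<open>L \<ge> 0\<close> by simp
    fix t :: real assume "t \<in> {0..1}"
    then obtain U where "open U" "p t \<in> U"
      and lip: "\<forall>x\<in>U \<inter> S. dist (f (p t)) (f x) \<le> L * dist (p t) x"
      using pointwise[OF p_in] by blast
    have "open (p -` U)"
      using \<open>open U\<close> unfolding p_def by (intro continuous_open_vimage continuous_intros)
    moreover have "dist ((f \<circ> p) t) ((f \<circ> p) s) \<le> L * dist a b * dist t s" if "s \<in> p -` U \<inter> {0..1}" for s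
    proof -
      have "dist (f (p t)) (f (p s)) \<le> L * dist (p t) (p s)"
        using lip p_in[of s] that by auto
      then show ?thesis
        by (simp add: dist_p mult.assoc)
    qed
    ultimately show "\<exists>V. open V \<and> t \<in> V \<and>
        (\<forall>s\<in>V \<inter> {0..1}. dist ((f \<circ> p) t) ((f \<circ> p) s) \<le> L * dist a b * dist t s)"
      using \<open>p t \<in> U\<close> by blast
  qed
  then have "dist ((f \<circ> p) 0) ((f \<circ> p) 1) \<le> L * dist a b * dist (0::real) 1"
    by (rule lipschitz_onD) auto
  then show "dist (f a) (f b) \<le> L * dist a b"
    by (simp add: p_def)
qed

lemma lipschitz_on_unit_cube_if_locally_lipschitz:
  fixes m :: "real ^ 'd \<Rightarrow> real"
  assumes "locally_lipschitz \<gamma> m"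
  shows "\<gamma>-lipschitz_on unit_cube m"
proof (rule lipschitz_on_convex_if_pointwise_lipschitz[OF convex_unit_cube])
  show "\<gamma> \<ge> 0"
    using assms by (simp add: locally_lipschitz_def)
  fix x :: "real ^ 'd" assume "x \<in> unit_cube"
  then obtain B U where "open U" "x \<in> U" "U \<inter> unit_cube \<subseteq> B"
    and "\<forall>y\<in>B. \<bar>m x - m y\<bar> \<le> \<gamma> * norm (x - y)"
    using assms unfolding locally_lipschitz_def by blast
  then show "\<exists>U. open U \<and> x \<in> U \<and> (\<forall>y\<in>U \<inter> unit_cube. dist (m x) (m y) \<le> \<gamma> * dist x y)"
    by (intro exI[of _ U]) (auto simp: dist_real_def dist_norm)
qed

theorem corollary2:
  fixes m mt :: "real ^ 'd \<Rightarrow> real" and W :: "(real ^ 'd) set"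
    and \<gamma>m \<gamma>mt \<delta> :: real
  assumes "binary_classifier m" and "binary_classifier mt"
    and "locally_lipschitz \<gamma>m m" and "locally_lipschitz \<gamma>mt mt"
    and "W \<subseteq> unit_cube"
    and "\<forall>w\<in>W. m w = mt w"
    and "delta_cover \<delta> W m"
    and "x \<in> decision_boundary m"
  shows "\<bar>mt x - m x\<bar> \<le> (\<gamma>m + \<gamma>mt) * \<delta>"
proof -
  obtain w where "w \<in> W" and close: "dist x w \<le> \<delta>"
    using assms(7,8) unfolding delta_cover_def dist_norm by blast
  have "x \<in> unit_cube" "w \<in> unit_cube"
    using assms(5,8) \<open>w \<in> W\<close> by (auto simp: decision_boundary_def)
  have lip_m: "\<gamma>m-lipschitz_on unit_cube m" and lip_mt: "\<gamma>mt-lipschitz_on unit_cube mt"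
    using assms(3,4) by (simp_all add: lipschitz_on_unit_cube_if_locally_lipschitz)
  have "\<bar>mt x - m x\<bar> \<le> dist (mt x) (mt w) + dist (m w) (m x)"
    using assms(6) \<open>w \<in> W\<close> by (simp add: dist_real_def)
  also have "\<dots> \<le> \<gamma>mt * dist x w + \<gamma>m * dist w x"
    using lipschitz_onD[OF lip_mt \<open>x \<in> unit_cube\<close> \<open>w \<in> unit_cube\<close>]
      lipschitz_onD[OF lip_m \<open>w \<in> unit_cube\<close> \<open>x \<in> unit_cube\<close>] by linarith
  also have "\<dots> \<le> \<gamma>mt * \<delta> + \<gamma>m * \<delta>"
    using close lipschitz_on_nonneg[OF lip_m] lipschitz_on_nonneg[OF lip_mt]
    by (intro add_mono mult_left_mono) (simp_all add: dist_commute)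
  also have "\<dots> = (\<gamma>m + \<gamma>mt) * \<delta>"
    by (simp add: algebra_simps)
  finally show ?thesis .
qed

end
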